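(* Fix a $C^0$-concept over $\mathbb{K}$. Let $E,F\in\mathcal{M}$, $U\subseteq E$ open, $f\colon U\to F$ of class $C^1$ and $x\in U$. Then $df(x)\colon E\to F$ is a $\mathbb{K}$-linear $C^0$-map.
   Context: Let $\mathbb{K}$ be a commutative ring with unit carrying a topology. A $C^0$-concept over $\mathbb{K}$ consists of: (a) a class $\mathcal{M}$ of topologized $\mathbb{K}$-modules with $\mathbb{K}\in\mathcal{M}$; (b) for $E,F\in\mathcal{M}$ and open $U\subseteq E$, a set $C^0(U,F)$ of continuous maps; (c) for $E_1,E_2\in\mathcal{M}$ a topology on $E_1\times E_2$ (not necessarily the product topology) making it a member of $\mathcal{M}$; subject to: (I.1) composites of $C^0$-maps are $C^0$, identities and inclusions of open subsets are $C^0$; (I.2) $x\mapsto rx+b$ is $C^0$; (I.3) $t\mapsto tv+x$ is $C^0$; (I.4) $\mathbb{K}^\times$ is open and inversion is $C^0$; (I.5) $C^0$ is local on open covers; (II.1) projections and $v\mapsto(v,y)$, $w\mapsto(x,w)$ are $C^0$; (II.2) $f_1\times f_2$ is $C^0$ for $C^0$-maps $f_i$; (II.3) diagonals are $C^0$; (II.4) exchange/associativity maps of products are $C^0$ both ways; (II.5) addition and scalar multiplication are $C^0$; (III) a $C^0$-map on open $U\subseteq\mathbb{K}$ is determined by its values on $U\cap\mathbb{K}^\times$. For open $U\subseteq E$, $U^{[1]}=\{(x,v,t)\in U\times E\times\mathbb{K}:x+tv\in U\}$; a $C^0$-map $f$ is $C^1$ if there is a $C^0$-map $f^{[1]}\colon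 U^{[1]}\to F$ with $f(x+tv)-f(x)=t\,f^{[1]}(x,v,t)$ for all $(x,v,t)\in U^{[1]}$ (unique), and $df(x)v:=f^{[1]}(x,v,0)$. *)

theory Defs
  imports "HOL-Analysis.Analysis"
begin

text \<open>The ring K is the type 'k (a commutative ring with unit) together with an
arbitrary topology TK on it. All modules of the class M live inside one universe type 'a:
a topologized module is a carrier set with operations and a topology on the carrier.\<close>

record ('k, 'a) tmod =
  mcarrier :: "'a set"
  madd :: "'a \<Rightarrow> 'a \<Rightarrow> 'a"
  mzero :: 'a
  msmul :: "'k \<Rightarrow> 'a \<Rightarrow> 'a"
  mtop :: "'a topology"

definition tmodule :: "('k::comm_ring_1, 'a) tmod \<Rightarrow> bool" where
  "tmodule E \<longleftrightarrow>
     mzero E \<in> mcarrier E \<and>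
     (\<forall>x\<in>mcarrier E. \<forall>y\<in>mcarrier E. madd E x y \<in> mcarrier E) \<and>
     (\<forall>r. \<forall>x\<in>mcarrier E. msmul E r x \<in> mcarrier E) \<and>
     (\<forall>x\<in>mcarrier E. \<forall>y\<in>mcarrier E. \<forall>z\<in>mcarrier E.
         madd E (madd E x y) z = madd E x (madd E y z)) \<and>
     (\<forall>x\<in>mcarrier E. \<forall>y\<in>mcarrier E. madd E x y = madd E y x) \<and>
     (\<forall>x\<in>mcarrier E. madd E (mzero E) x = x) \<and>
     (\<forall>x\<in>mcarrier E. madd E x (msmul E (-1) x) = mzero E) \<and>
     (\<forall>x\<in>mcarrier E. msmul E 1 x = x) \<and>
     (\<forall>r s. \<forall>x\<in>mcarrier E. msmul E (r * s) x = msmul E r (msmul E s x)) \<and>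
     (\<forall>r s. \<forall>x\<in>mcarrier E. msmul E (r + s) x = madd E (msmul E r x) (msmul E s x)) \<and>
     (\<forall>r. \<forall>x\<in>mcarrier E. \<forall>y\<in>mcarrier E.
         msmul E r (madd E x y) = madd E (msmul E r x) (msmul E r y)) \<and>
     topspace (mtop E) = mcarrier E"

definition msub :: "('k::comm_ring_1, 'a) tmod \<Rightarrow> 'a \<Rightarrow> 'a \<Rightarrow> 'a" where
  "msub E x y = madd E x (msmul E (-1) y)"

definition kunits :: "'k::comm_ring_1 set" where
  "kunits = {r. \<exists>s. r * s = 1}"

definition kinverse :: "'k::comm_ring_1 \<Rightarrow> 'k" where
  "kinverse r = (THE s. r * s = 1)"

text \<open>
  cM: the class M;  cC0 E U F f: "f is in C^0(U,F)" for U open in E (a predicate on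
  functions of the universe; only values on U matter);  cK: the module K viewed as member
  of M, with the identification cemb : 'k -> carrier cK;  cprod E1 E2: the module
  E1 x E2 (with the topology chosen by the concept), with cpair E1 E2 x y the element
  corresponding to the pair (x,y).\<close>

record ('k, 'a) c0data =
  cM :: "('k, 'a) tmod set"
  cC0 :: "('k, 'a) tmod \<Rightarrow> 'a set \<Rightarrow> ('k, 'a) tmod \<Rightarrow> ('a \<Rightarrow> 'a) \<Rightarrow> bool"
  cK :: "('k, 'a) tmod"
  cemb :: "'k \<Rightarrow> 'a"
  cprod :: "('k, 'a) tmod \<Rightarrow> ('k, 'a) tmod \<Rightarrow> ('k, 'a) tmod"
  cpair :: "('k, 'a) tmod \<Rightarrow> ('k, 'a) tmod \<Rightarrow> 'a \<Rightarrow> 'a \<Rightarrow> 'a"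

definition kof :: "('k, 'a) c0data \<Rightarrow> 'a \<Rightarrow> 'k" where
  "kof C a = inv_into UNIV (cemb C) a"

definition pfst :: "('k, 'a) c0data \<Rightarrow> ('k, 'a) tmod \<Rightarrow> ('k, 'a) tmod \<Rightarrow> 'a \<Rightarrow> 'a" where
  "pfst C E1 E2 z = (THE x. x \<in> mcarrier E1 \<and> (\<exists>y\<in>mcarrier E2. z = cpair C E1 E2 x y))"

definition psnd :: "('k, 'a) c0data \<Rightarrow> ('k, 'a) tmod \<Rightarrow> ('k, 'a) tmod \<Rightarrow> 'a \<Rightarrow> 'a" where
  "psnd C E1 E2 z = (THE y. y \<in> mcarrier E2 \<and> (\<exists>x\<in>mcarrier E1. z = cpair C E1 E2 x y))"

definition c0_structure :: "'k::comm_ring_1 topology \<Rightarrow> ('k, 'a) c0data \<Rightarrow> bool" where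
  "c0_structure TK C \<longleftrightarrow>
     topspace TK = UNIV \<and>
     (\<forall>E\<in>cM C. tmodule E) \<and>
     \<comment> \<open>K is a member of M\<close>
     cK C \<in> cM C \<and>
     bij_betw (cemb C) UNIV (mcarrier (cK C)) \<and>
     (\<forall>r s. cemb C (r + s) = madd (cK C) (cemb C r) (cemb C s)) \<and>
     cemb C 0 = mzero (cK C) \<and>
     (\<forall>r s. msmul (cK C) r (cemb C s) = cemb C (r * s)) \<and>
     homeomorphic_map TK (mtop (cK C)) (cemb C) \<and>
     \<comment> \<open>products: E1 x E2 with module structure of the product, some topology\<close>
     (\<forall>E1\<in>cM C. \<forall>E2\<in>cM C.
        cprod C E1 E2 \<in> cM C \<and>
        bij_betw (\<lambda>(x, y). cpair C E1 E2 x y) (mcarrier E1 \<times> mcarrier E2)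
                 (mcarrier (cprod C E1 E2)) \<and>
        mzero (cprod C E1 E2) = cpair C E1 E2 (mzero E1) (mzero E2) \<and>
        (\<forall>x\<in>mcarrier E1. \<forall>y\<in>mcarrier E2. \<forall>x'\<in>mcarrier E1. \<forall>y'\<in>mcarrier E2.
           madd (cprod C E1 E2) (cpair C E1 E2 x y) (cpair C E1 E2 x' y')
             = cpair C E1 E2 (madd E1 x x') (madd E2 y y')) \<and>
        (\<forall>r. \<forall>x\<in>mcarrier E1. \<forall>y\<in>mcarrier E2.
           msmul (cprod C E1 E2) r (cpair C E1 E2 x y)
             = cpair C E1 E2 (msmul E1 r x) (msmul E2 r y)))"

definition c0_maps_ax :: "('k::comm_ring_1, 'a) c0data \<Rightarrow> bool" where
  "c0_maps_ax C \<longleftrightarrow>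
     (\<forall>E\<in>cM C. \<forall>F\<in>cM C. \<forall>U f. cC0 C E U F f \<longrightarrow>
        openin (mtop E) U \<and> f ` U \<subseteq> mcarrier F \<and>
        continuous_map (subtopology (mtop E) U) (mtop F) f) \<and>
     (\<forall>E\<in>cM C. \<forall>F\<in>cM C. \<forall>U f g. cC0 C E U F f \<and> (\<forall>x\<in>U. f x = g x) \<longrightarrow> cC0 C E U F g)"

definition ax_I :: "'k::comm_ring_1 topology \<Rightarrow> ('k, 'a) c0data \<Rightarrow> bool" where
  "ax_I TK C \<longleftrightarrow>
     \<comment> \<open>(I.1)\<close>
     (\<forall>E\<in>cM C. \<forall>F\<in>cM C. \<forall>G\<in>cM C. \<forall>U V f g.
        cC0 C E U F f \<and> cC0 C F V G g \<and> f ` U \<subseteq> V \<longrightarrow> cC0 C E U G (g \<circ> f)) \<and>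
     (\<forall>E\<in>cM C. \<forall>U. openin (mtop E) U \<longrightarrow> cC0 C E U E id) \<and>
     (\<forall>E\<in>cM C. \<forall>F\<in>cM C. \<forall>U V f.
        cC0 C E U F f \<and> openin (mtop E) V \<and> V \<subseteq> U \<longrightarrow> cC0 C E V F f) \<and>
     \<comment> \<open>(I.2)\<close>
     (\<forall>E\<in>cM C. \<forall>r. \<forall>b\<in>mcarrier E.
        cC0 C E (mcarrier E) E (\<lambda>x. madd E (msmul E r x) b)) \<and>
     \<comment> \<open>(I.3)\<close>
     (\<forall>E\<in>cM C. \<forall>v\<in>mcarrier E. \<forall>x\<in>mcarrier E.
        cC0 C (cK C) (mcarrier (cK C)) E (\<lambda>t. madd E (msmul E (kof C t) v) x)) \<and>
     \<comment> \<open>(I.4)\<close>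
     openin TK kunits \<and>
     cC0 C (cK C) (cemb C ` kunits) (cK C) (\<lambda>a. cemb C (kinverse (kof C a))) \<and>
     \<comment> \<open>(I.5)\<close>
     (\<forall>E\<in>cM C. \<forall>F\<in>cM C. \<forall>U f \<U>.
        (\<forall>V\<in>\<U>. cC0 C E V F f) \<and> \<Union>\<U> = U \<longrightarrow> cC0 C E U F f)"

definition ax_II :: "('k::comm_ring_1, 'a) c0data \<Rightarrow> bool" where
  "ax_II C \<longleftrightarrow>
     \<comment> \<open>(II.1)\<close>
     (\<forall>E1\<in>cM C. \<forall>E2\<in>cM C.
        cC0 C (cprod C E1 E2) (mcarrier (cprod C E1 E2)) E1 (pfst C E1 E2) \<and>
        cC0 C (cprod C E1 E2) (mcarrier (cprod C E1 E2)) E2 (psnd C E1 E2) \<and>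
        (\<forall>y\<in>mcarrier E2. cC0 C E1 (mcarrier E1) (cprod C E1 E2) (\<lambda>v. cpair C E1 E2 v y)) \<and>
        (\<forall>x\<in>mcarrier E1. cC0 C E2 (mcarrier E2) (cprod C E1 E2) (\<lambda>w. cpair C E1 E2 x w))) \<and>
     \<comment> \<open>(II.2)\<close>
     (\<forall>E1\<in>cM C. \<forall>E2\<in>cM C. \<forall>F1\<in>cM C. \<forall>F2\<in>cM C. \<forall>U1 U2 f1 f2.
        cC0 C E1 U1 F1 f1 \<and> cC0 C E2 U2 F2 f2 \<longrightarrow>
        cC0 C (cprod C E1 E2) ((\<lambda>(x, y). cpair C E1 E2 x y) ` (U1 \<times> U2)) (cprod C F1 F2)
          (\<lambda>z. cpair C F1 F2 (f1 (pfst C E1 E2 z)) (f2 (psnd C E1 E2 z)))) \<and>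
     \<comment> \<open>(II.3)\<close>
     (\<forall>E\<in>cM C. cC0 C E (mcarrier E) (cprod C E E) (\<lambda>x. cpair C E E x x)) \<and>
     \<comment> \<open>(II.4)\<close>
     (\<forall>E1\<in>cM C. \<forall>E2\<in>cM C.
        cC0 C (cprod C E1 E2) (mcarrier (cprod C E1 E2)) (cprod C E2 E1)
          (\<lambda>z. cpair C E2 E1 (psnd C E1 E2 z) (pfst C E1 E2 z))) \<and>
     (\<forall>E1\<in>cM C. \<forall>E2\<in>cM C. \<forall>E3\<in>cM C.
        cC0 C (cprod C (cprod C E1 E2) E3) (mcarrier (cprod C (cprod C E1 E2) E3))
          (cprod C E1 (cprod C E2 E3))
          (\<lambda>z. cpair C E1 (cprod C E2 E3)
                 (pfst C E1 E2 (pfst C (cprod C E1 E2) E3 z))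
                 (cpair C E2 E3 (psnd C E1 E2 (pfst C (cprod C E1 E2) E3 z))
                                (psnd C (cprod C E1 E2) E3 z))) \<and>
        cC0 C (cprod C E1 (cprod C E2 E3)) (mcarrier (cprod C E1 (cprod C E2 E3)))
          (cprod C (cprod C E1 E2) E3)
          (\<lambda>z. cpair C (cprod C E1 E2) E3
                 (cpair C E1 E2 (pfst C E1 (cprod C E2 E3) z)
                                (pfst C E2 E3 (psnd C E1 (cprod C E2 E3) z)))
                 (psnd C E2 E3 (psnd C E1 (cprod C E2 E3) z)))) \<and>
     \<comment> \<open>(II.5)\<close>
     (\<forall>E\<in>cM C.
        cC0 C (cprod C E E) (mcarrier (cprod C E E)) E
          (\<lambda>z. madd E (pfst C E E z) (psnd C E E z)) \<and>
        cC0 C (cprod C (cK C) E) (mcarrier (cprod C (cK C) E)) E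
          (\<lambda>z. msmul E (kof C (pfst C (cK C) E z)) (psnd C (cK C) E z)))"

definition ax_III :: "('k::comm_ring_1, 'a) c0data \<Rightarrow> bool" where
  "ax_III C \<longleftrightarrow>
     (\<forall>F\<in>cM C. \<forall>U f g.
        cC0 C (cK C) U F f \<and> cC0 C (cK C) U F g \<and>
        (\<forall>x\<in>U \<inter> cemb C ` kunits. f x = g x) \<longrightarrow> (\<forall>x\<in>U. f x = g x))"

definition c0_concept :: "'k::comm_ring_1 topology \<Rightarrow> ('k, 'a) c0data \<Rightarrow> bool" where
  "c0_concept TK C \<longleftrightarrow>
     c0_structure TK C \<and> c0_maps_ax C \<and> ax_I TK C \<and> ax_II C \<and> ax_III C"

text \<open>U^[1] as a subset of E x (E x K), the triple (x,v,t) being cpair x (cpair v t).\<close>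

definition triple :: "('k, 'a) c0data \<Rightarrow> ('k, 'a) tmod \<Rightarrow> 'a \<Rightarrow> 'a \<Rightarrow> 'k \<Rightarrow> 'a" where
  "triple C E x v t = cpair C E (cprod C E (cK C)) x (cpair C E (cK C) v (cemb C t))"

definition U1 :: "('k::comm_ring_1, 'a) c0data \<Rightarrow> ('k, 'a) tmod \<Rightarrow> 'a set \<Rightarrow> 'a set" where
  "U1 C E U = {triple C E x v t | x v t.
                 x \<in> U \<and> v \<in> mcarrier E \<and> madd E x (msmul E t v) \<in> U}"

definition is_f1 :: "('k::comm_ring_1, 'a) c0data \<Rightarrow> ('k, 'a) tmod \<Rightarrow> 'a set \<Rightarrow> ('k, 'a) tmod
                      \<Rightarrow> ('a \<Rightarrow> 'a) \<Rightarrow> ('a \<Rightarrow> 'a) \<Rightarrow> bool" where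
  "is_f1 C E U F f g \<longleftrightarrow>
     cC0 C (cprod C E (cprod C E (cK C))) (U1 C E U) F g \<and>
     (\<forall>x\<in>U. \<forall>v\<in>mcarrier E. \<forall>t. madd E x (msmul E t v) \<in> U \<longrightarrow>
        msub F (f (madd E x (msmul E t v))) (f x) = msmul F t (g (triple C E x v t)))"

definition is_C1 :: "('k::comm_ring_1, 'a) c0data \<Rightarrow> ('k, 'a) tmod \<Rightarrow> 'a set \<Rightarrow> ('k, 'a) tmod
                      \<Rightarrow> ('a \<Rightarrow> 'a) \<Rightarrow> bool" where
  "is_C1 C E U F f \<longleftrightarrow> cC0 C E U F f \<and> (\<exists>g. is_f1 C E U F f g)"

text \<open>df(x)v = f^[1](x,v,0) (f^[1] is unique on U^[1], so the choice is irrelevant).\<close>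

definition dmap :: "('k::comm_ring_1, 'a) c0data \<Rightarrow> ('k, 'a) tmod \<Rightarrow> 'a set \<Rightarrow> ('k, 'a) tmod
                      \<Rightarrow> ('a \<Rightarrow> 'a) \<Rightarrow> 'a \<Rightarrow> 'a \<Rightarrow> 'a" where
  "dmap C E U F f x v = (SOME g. is_f1 C E U F f g) (triple C E x v 0)"

end

theory Submission
  imports Defs
begin

text \<open>
  Write g for f^[1]. Since g is C^0, so is its composite with the C^0 map v |-> (x, v, 0).
  For additivity, t |-> g(x, v + w, t) and t |-> g(x, v, t) + g(x + tv, w, t) are C^0 on an
  open neighbourhood of 0 in K; for a unit t, multiplying either by t gives f(x + t(v + w)) - f(x)
  (telescoping through f(x + tv)), so after cancelling t they agree at all units, hence at
  t = 0 by axiom (III). Homogeneity is the same argument for g(x, rv, t) and r g(x, v, rt).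
\<close>

context
  fixes E :: "('k::comm_ring_1, 'a) tmod"
  assumes module: "tmodule E"
begin

lemma tmodule_zero_closed: "mzero E \<in> mcarrier E"
  using module unfolding tmodule_def by (elim conjE) blast

lemma tmodule_add_closed: "x \<in> mcarrier E \<Longrightarrow> y \<in> mcarrier E \<Longrightarrow> madd E x y \<in> mcarrier E"
  using module unfolding tmodule_def by (elim conjE) blast

lemma tmodule_smul_closed: "x \<in> mcarrier E \<Longrightarrow> msmul E r x \<in> mcarrier E"
  using module unfolding tmodule_def by (elim conjE) blast

lemma tmodule_add_assoc:
  "x \<in> mcarrier E \<Longrightarrow> y \<in> mcarrier E \<Longrightarrow> z \<in> mcarrier E \<Longrightarrow>
   madd E (madd E x y) z = madd E x (madd E y z)"
  using module unfolding tmodule_def by (elim conjE) blast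

lemma tmodule_add_commute: "x \<in> mcarrier E \<Longrightarrow> y \<in> mcarrier E \<Longrightarrow> madd E x y = madd E y x"
  using module unfolding tmodule_def by (elim conjE) blast

lemma tmodule_zero_add: "x \<in> mcarrier E \<Longrightarrow> madd E (mzero E) x = x"
  using module unfolding tmodule_def by (elim conjE) blast

lemma tmodule_add_zero: "x \<in> mcarrier E \<Longrightarrow> madd E x (mzero E) = x"
  using tmodule_add_commute tmodule_zero_add tmodule_zero_closed by metis

lemma tmodule_add_neg: "x \<in> mcarrier E \<Longrightarrow> madd E x (msmul E (-1) x) = mzero E"
  using module unfolding tmodule_def by (elim conjE) blast

lemma tmodule_smul_one: "x \<in> mcarrier E \<Longrightarrow> msmul E 1 x = x"
  using module unfolding tmodule_def by (elim conjE) blast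

lemma tmodule_smul_mult: "x \<in> mcarrier E \<Longrightarrow> msmul E (r * s) x = msmul E r (msmul E s x)"
  using module unfolding tmodule_def by (elim conjE) blast

lemma tmodule_add_smul:
  "x \<in> mcarrier E \<Longrightarrow> msmul E (r + s) x = madd E (msmul E r x) (msmul E s x)"
  using module unfolding tmodule_def by (elim conjE) blast

lemma tmodule_smul_add:
  "x \<in> mcarrier E \<Longrightarrow> y \<in> mcarrier E \<Longrightarrow>
   msmul E r (madd E x y) = madd E (msmul E r x) (msmul E r y)"
  using module unfolding tmodule_def by simp

lemma tmodule_topspace: "topspace (mtop E) = mcarrier E"
  using module unfolding tmodule_def by (elim conjE) blast

lemma tmodule_smul_zero:
  assumes x: "x \<in> mcarrier E"
  shows "msmul E 0 x = mzero E"
proof -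
  let ?y = "msmul E 0 x"
  have y: "?y \<in> mcarrier E" using x tmodule_smul_closed by blast
  have "madd E ?y ?y = ?y" using tmodule_add_smul[OF x, of 0 0] by simp
  then have "mzero E = madd E (madd E ?y ?y) (msmul E (-1) ?y)"
    using tmodule_add_neg[OF y] by simp
  also have "\<dots> = madd E ?y (mzero E)"
    using tmodule_add_assoc tmodule_add_neg y tmodule_smul_closed by simp
  also have "\<dots> = ?y" using tmodule_add_zero y by blast
  finally show ?thesis by simp
qed

lemma tmodule_sub_add_sub:
  assumes a: "a \<in> mcarrier E" and b: "b \<in> mcarrier E" and c: "c \<in> mcarrier E"
  shows "madd E (msub E a b) (msub E b c) = msub E a c"
proof -
  have nb: "msmul E (-1) b \<in> mcarrier E" and nc: "msmul E (-1) c \<in> mcarrier E"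
    using b c tmodule_smul_closed by blast+
  have "madd E (msub E a b) (msub E b c)
      = madd E a (madd E (madd E (msmul E (-1) b) b) (msmul E (-1) c))"
    unfolding msub_def using tmodule_add_assoc a nb b nc tmodule_add_closed by simp
  also have "madd E (msmul E (-1) b) b = mzero E"
    using tmodule_add_commute[OF nb b] tmodule_add_neg[OF b] by simp
  finally show ?thesis unfolding msub_def using tmodule_zero_add nc by simp
qed

lemma tmodule_add_smul_add:
  "x \<in> mcarrier E \<Longrightarrow> v \<in> mcarrier E \<Longrightarrow> w \<in> mcarrier E \<Longrightarrow>
   madd E (madd E x (msmul E t v)) (msmul E t w) = madd E x (msmul E t (madd E v w))"
  using tmodule_add_assoc tmodule_smul_closed tmodule_smul_add by simp

lemma tmodule_smul_unit_cancel:
  assumes "s * t = 1" and p: "p \<in> mcarrier E" and q: "q \<in> mcarrier E"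
    and eq: "msmul E t p = msmul E t q"
  shows "p = q"
  by (metis assms tmodule_smul_mult tmodule_smul_one)

end

locale c0_setting =
  fixes TK :: "'k::comm_ring_1 topology" and C :: "('k, 'a) c0data"
  assumes concept: "c0_concept TK C"
begin

lemma structure_axioms: "c0_structure TK C" and C0_maps_axioms: "c0_maps_ax C"
  and axioms_I: "ax_I TK C" and axioms_II: "ax_II C" and axioms_III: "ax_III C"
  using concept unfolding c0_concept_def by simp_all

lemma tmodule_M: "E \<in> cM C \<Longrightarrow> tmodule E"
  using structure_axioms unfolding c0_structure_def by (elim conjE) blast

lemma K_in_M: "cK C \<in> cM C"
  using structure_axioms unfolding c0_structure_def by (elim conjE) blast

lemma prod_in_M: "E1 \<in> cM C \<Longrightarrow> E2 \<in> cM C \<Longrightarrow> cprod C E1 E2 \<in> cM C"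
  using structure_axioms unfolding c0_structure_def by (elim conjE) blast

lemma bij_pair:
  "E1 \<in> cM C \<Longrightarrow> E2 \<in> cM C \<Longrightarrow>
   bij_betw (\<lambda>(x, y). cpair C E1 E2 x y) (mcarrier E1 \<times> mcarrier E2) (mcarrier (cprod C E1 E2))"
  using structure_axioms unfolding c0_structure_def by (elim conjE) blast

lemma bij_emb: "bij_betw (cemb C) UNIV (mcarrier (cK C))"
  using structure_axioms unfolding c0_structure_def by (elim conjE) blast

lemma emb_in_K: "cemb C t \<in> mcarrier (cK C)"
  using bij_emb bij_betwE by blast

lemma kof_emb [simp]: "kof C (cemb C t) = t"
  unfolding kof_def using bij_betw_imp_inj_on[OF bij_emb] by simp

lemma emb_kof: "a \<in> mcarrier (cK C) \<Longrightarrow> cemb C (kof C a) = a"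
  unfolding kof_def by (rule f_inv_into_f) (simp add: bij_betw_imp_surj_on[OF bij_emb])

lemma smul_K_emb: "msmul (cK C) r (cemb C s) = cemb C (r * s)"
  using structure_axioms unfolding c0_structure_def by (elim conjE) blast

lemma pair_in_prod:
  "E1 \<in> cM C \<Longrightarrow> E2 \<in> cM C \<Longrightarrow> x \<in> mcarrier E1 \<Longrightarrow> y \<in> mcarrier E2 \<Longrightarrow>
   cpair C E1 E2 x y \<in> mcarrier (cprod C E1 E2)"
  using bij_betwE[OF bij_pair] by fastforce

lemma pair_inject:
  assumes "E1 \<in> cM C" "E2 \<in> cM C" "x \<in> mcarrier E1" "y \<in> mcarrier E2"
    "x' \<in> mcarrier E1" "y' \<in> mcarrier E2" "cpair C E1 E2 x y = cpair C E1 E2 x' y'"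
  shows "x = x' \<and> y = y'"
  using inj_onD[OF bij_betw_imp_inj_on[OF bij_pair[OF assms(1,2)]], of "(x, y)" "(x', y')"] assms
  by auto

lemma pfst_pair [simp]:
  assumes "E1 \<in> cM C" "E2 \<in> cM C" "x \<in> mcarrier E1" "y \<in> mcarrier E2"
  shows "pfst C E1 E2 (cpair C E1 E2 x y) = x"
  unfolding pfst_def using assms pair_inject[OF assms] by (intro the_equality) blast+

lemma psnd_pair [simp]:
  assumes "E1 \<in> cM C" "E2 \<in> cM C" "x \<in> mcarrier E1" "y \<in> mcarrier E2"
  shows "psnd C E1 E2 (cpair C E1 E2 x y) = y"
  unfolding psnd_def using assms pair_inject[OF assms] by (intro the_equality) blast+

lemma C0_openin: "E \<in> cM C \<Longrightarrow> F \<in> cM C \<Longrightarrow> cC0 C E U F f \<Longrightarrow> openin (mtop E) U"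
  using C0_maps_axioms unfolding c0_maps_ax_def by (elim conjE) blast

lemma C0_image: "E \<in> cM C \<Longrightarrow> F \<in> cM C \<Longrightarrow> cC0 C E U F f \<Longrightarrow> f ` U \<subseteq> mcarrier F"
  using C0_maps_axioms unfolding c0_maps_ax_def by (elim conjE) blast

lemma C0_continuous_map:
  "E \<in> cM C \<Longrightarrow> F \<in> cM C \<Longrightarrow> cC0 C E U F f \<Longrightarrow>
   continuous_map (subtopology (mtop E) U) (mtop F) f"
  using C0_maps_axioms unfolding c0_maps_ax_def by (elim conjE) blast

lemma C0_cong:
  "E \<in> cM C \<Longrightarrow> F \<in> cM C \<Longrightarrow> cC0 C E U F f \<Longrightarrow> (\<And>x. x \<in> U \<Longrightarrow> f x = g x) \<Longrightarrow>
   cC0 C E U F g"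
  using C0_maps_axioms unfolding c0_maps_ax_def by (elim conjE) blast

lemma C0_comp:
  "E \<in> cM C \<Longrightarrow> F \<in> cM C \<Longrightarrow> G \<in> cM C \<Longrightarrow> cC0 C E U F f \<Longrightarrow> cC0 C F V G g \<Longrightarrow>
   f ` U \<subseteq> V \<Longrightarrow> cC0 C E U G (g \<circ> f)"
  using axioms_I unfolding ax_I_def by (elim conjE) metis

lemma C0_restrict:
  "E \<in> cM C \<Longrightarrow> F \<in> cM C \<Longrightarrow> cC0 C E U F f \<Longrightarrow> openin (mtop E) V \<Longrightarrow> V \<subseteq> U \<Longrightarrow>
   cC0 C E V F f"
  using axioms_I unfolding ax_I_def by (elim conjE) metis

lemma C0_affine:
  "E \<in> cM C \<Longrightarrow> b \<in> mcarrier E \<Longrightarrow> cC0 C E (mcarrier E) E (\<lambda>x. madd E (msmul E r x) b)"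
  using axioms_I unfolding ax_I_def by (elim conjE) metis

lemma C0_line:
  "E \<in> cM C \<Longrightarrow> v \<in> mcarrier E \<Longrightarrow> x \<in> mcarrier E \<Longrightarrow>
   cC0 C (cK C) (mcarrier (cK C)) E (\<lambda>t. madd E (msmul E (kof C t) v) x)"
  using axioms_I unfolding ax_I_def by (elim conjE) metis

lemma C0_pair_right:
  "E1 \<in> cM C \<Longrightarrow> E2 \<in> cM C \<Longrightarrow> y \<in> mcarrier E2 \<Longrightarrow>
   cC0 C E1 (mcarrier E1) (cprod C E1 E2) (\<lambda>v. cpair C E1 E2 v y)"
  using axioms_II[unfolded ax_II_def, THEN conjunct1] by blast

lemma C0_psnd:
  "E1 \<in> cM C \<Longrightarrow> E2 \<in> cM C \<Longrightarrow>
   cC0 C (cprod C E1 E2) (mcarrier (cprod C E1 E2)) E2 (psnd C E1 E2)"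
  using axioms_II[unfolded ax_II_def, THEN conjunct1] by blast

lemma C0_prod_map:
  "E1 \<in> cM C \<Longrightarrow> E2 \<in> cM C \<Longrightarrow> F1 \<in> cM C \<Longrightarrow> F2 \<in> cM C \<Longrightarrow>
   cC0 C E1 A1 F1 f1 \<Longrightarrow> cC0 C E2 A2 F2 f2 \<Longrightarrow>
   cC0 C (cprod C E1 E2) ((\<lambda>(x, y). cpair C E1 E2 x y) ` (A1 \<times> A2)) (cprod C F1 F2)
     (\<lambda>z. cpair C F1 F2 (f1 (pfst C E1 E2 z)) (f2 (psnd C E1 E2 z)))"
  using axioms_II[unfolded ax_II_def, THEN conjunct2, THEN conjunct1] by blast

lemma C0_diag: "E \<in> cM C \<Longrightarrow> cC0 C E (mcarrier E) (cprod C E E) (\<lambda>x. cpair C E E x x)"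
  using axioms_II[unfolded ax_II_def, THEN conjunct2, THEN conjunct2, THEN conjunct1] by blast

lemma C0_add_map:
  "E \<in> cM C \<Longrightarrow>
   cC0 C (cprod C E E) (mcarrier (cprod C E E)) E (\<lambda>z. madd E (pfst C E E z) (psnd C E E z))"
  using axioms_II[unfolded ax_II_def,
      THEN conjunct2, THEN conjunct2, THEN conjunct2, THEN conjunct2, THEN conjunct2]
  by blast

lemma C0_eq_on_units:
  "F \<in> cM C \<Longrightarrow> cC0 C (cK C) U F f \<Longrightarrow> cC0 C (cK C) U F g \<Longrightarrow>
   (\<And>a. a \<in> U \<inter> cemb C ` kunits \<Longrightarrow> f a = g a) \<Longrightarrow> a \<in> U \<Longrightarrow> f a = g a"
  using axioms_III unfolding ax_III_def by blast

lemma openin_carrier_subset: "E \<in> cM C \<Longrightarrow> openin (mtop E) U \<Longrightarrow> U \<subseteq> mcarrier E"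
  using openin_subset tmodule_topspace[OF tmodule_M] by metis

lemma kof_smul_K: "a \<in> mcarrier (cK C) \<Longrightarrow> kof C (msmul (cK C) r a) = r * kof C a"
  using smul_K_emb[of r "kof C a"] emb_kof by simp

lemma C0_ident: "E \<in> cM C \<Longrightarrow> openin (mtop E) U \<Longrightarrow> cC0 C E U E (\<lambda>x. x)"
  using axioms_I unfolding ax_I_def id_def by (elim conjE) metis

lemma C0_scale: "E \<in> cM C \<Longrightarrow> cC0 C E (mcarrier E) E (\<lambda>x. msmul E r x)"
  by (rule C0_cong[OF _ _ C0_affine[OF _ tmodule_zero_closed[OF tmodule_M]]])
    (simp_all add: tmodule_add_zero[OF tmodule_M] tmodule_smul_closed[OF tmodule_M])

lemma C0_const:
  assumes G: "G \<in> cM C" and E: "E \<in> cM C" and D: "openin (mtop G) D" and b: "b \<in> mcarrier E"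
  shows "cC0 C G D E (\<lambda>_. b)"
proof -
  have GE: "cprod C G E \<in> cM C" using prod_in_M[OF G E] .
  have "cC0 C G (mcarrier G) E (psnd C G E \<circ> (\<lambda>v. cpair C G E v b))"
    by (rule C0_comp[OF G GE E C0_pair_right[OF G E b] C0_psnd[OF G E]])
      (use pair_in_prod[OF G E _ b] in blast)
  then have "cC0 C G (mcarrier G) E (\<lambda>_. b)"
    by (rule C0_cong[OF G E]) (simp add: G E b)
  then show ?thesis
    using C0_restrict[OF G E _ D openin_carrier_subset[OF G D]] by blast
qed

lemma C0_pairing:
  assumes G: "G \<in> cM C" and E1: "E1 \<in> cM C" and E2: "E2 \<in> cM C"
    and \<phi>: "cC0 C G D E1 \<phi>" and \<psi>: "cC0 C G D E2 \<psi>"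
  shows "cC0 C G D (cprod C E1 E2) (\<lambda>a. cpair C E1 E2 (\<phi> a) (\<psi> a))"
proof -
  have GG: "cprod C G G \<in> cM C" and E12: "cprod C E1 E2 \<in> cM C"
    using prod_in_M G E1 E2 by blast+
  have D: "openin (mtop G) D" using C0_openin[OF G E1 \<phi>] .
  have DG: "D \<subseteq> mcarrier G" using openin_carrier_subset[OF G D] .
  have diag: "cC0 C G D (cprod C G G) (\<lambda>x. cpair C G G x x)"
    using C0_restrict[OF G GG C0_diag[OF G] D DG] .
  have "cC0 C G D (cprod C E1 E2)
     ((\<lambda>z. cpair C E1 E2 (\<phi> (pfst C G G z)) (\<psi> (psnd C G G z))) \<circ> (\<lambda>x. cpair C G G x x))"
    by (rule C0_comp[OF G GG E12 diag C0_prod_map[OF G G E1 E2 \<phi> \<psi>]]) force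
  then show ?thesis
    by (rule C0_cong[OF G E12]) (use DG G in auto)
qed

lemma C0_add:
  assumes G: "G \<in> cM C" and F: "F \<in> cM C"
    and \<phi>: "cC0 C G D F \<phi>" and \<psi>: "cC0 C G D F \<psi>"
  shows "cC0 C G D F (\<lambda>a. madd F (\<phi> a) (\<psi> a))"
proof -
  have FF: "cprod C F F \<in> cM C" using prod_in_M[OF F F] .
  have pair: "cC0 C G D (cprod C F F) (\<lambda>a. cpair C F F (\<phi> a) (\<psi> a))"
    by (rule C0_pairing[OF G F F \<phi> \<psi>])
  have "cC0 C G D F ((\<lambda>z. madd F (pfst C F F z) (psnd C F F z)) \<circ> (\<lambda>a. cpair C F F (\<phi> a) (\<psi> a)))"
    by (rule C0_comp[OF G FF F pair C0_add_map[OF F] C0_image[OF G FF pair]])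
  then show ?thesis
    by (rule C0_cong[OF G F])
      (use C0_image[OF G F \<phi>] C0_image[OF G F \<psi>] F in \<open>auto simp: image_subset_iff\<close>)
qed

lemma C0_smul:
  assumes G: "G \<in> cM C" and F: "F \<in> cM C" and \<phi>: "cC0 C G D F \<phi>"
  shows "cC0 C G D F (\<lambda>a. msmul F r (\<phi> a))"
proof -
  have F0: "mzero F \<in> mcarrier F" using tmodule_zero_closed[OF tmodule_M[OF F]] .
  have "cC0 C G D F ((\<lambda>x. madd F (msmul F r x) (mzero F)) \<circ> \<phi>)"
    by (rule C0_comp[OF G F F \<phi> C0_affine[OF F F0] C0_image[OF G F \<phi>]])
  then show ?thesis
    by (rule C0_cong[OF G F])
      (use C0_image[OF G F \<phi>] tmodule_add_zero[OF tmodule_M[OF F]]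
         tmodule_smul_closed[OF tmodule_M[OF F]] in \<open>auto simp: image_subset_iff\<close>)
qed

lemma C0_triple:
  assumes G: "G \<in> cM C" and E: "E \<in> cM C"
    and \<phi>: "cC0 C G D E \<phi>" and \<psi>: "cC0 C G D E \<psi>" and \<tau>: "cC0 C G D (cK C) \<tau>"
  shows "cC0 C G D (cprod C E (cprod C E (cK C))) (\<lambda>a. triple C E (\<phi> a) (\<psi> a) (kof C (\<tau> a)))"
proof -
  have EK: "cprod C E (cK C) \<in> cM C" and EEK: "cprod C E (cprod C E (cK C)) \<in> cM C"
    using prod_in_M E K_in_M by blast+
  have "cC0 C G D (cprod C E (cprod C E (cK C)))
          (\<lambda>a. cpair C E (cprod C E (cK C)) (\<phi> a) (cpair C E (cK C) (\<psi> a) (\<tau> a)))"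
    by (rule C0_pairing[OF G E EK \<phi> C0_pairing[OF G E K_in_M \<psi> \<tau>]])
  then show ?thesis
    by (rule C0_cong[OF G EEK]) (use C0_image[OF G K_in_M \<tau>] in \<open>auto simp: triple_def emb_kof\<close>)
qed

lemma openin_line_preimage:
  assumes E: "E \<in> cM C" and U: "openin (mtop E) U" and y: "y \<in> mcarrier E" and v: "v \<in> mcarrier E"
  shows "openin (mtop (cK C)) {a \<in> mcarrier (cK C). madd E y (msmul E (kof C a) v) \<in> U}"
proof -
  have "continuous_map (subtopology (mtop (cK C)) (mcarrier (cK C))) (mtop E)
          (\<lambda>a. madd E (msmul E (kof C a) v) y)"
    using C0_continuous_map[OF K_in_M E C0_line[OF E v y]] .
  then have "continuous_map (mtop (cK C)) (mtop E) (\<lambda>a. madd E (msmul E (kof C a) v) y)"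
    by (metis subtopology_topspace tmodule_topspace[OF tmodule_M[OF K_in_M]])
  from openin_continuous_map_preimage[OF this U]
  show ?thesis
    using tmodule_topspace[OF tmodule_M[OF K_in_M]] y
      tmodule_add_commute[OF tmodule_M[OF E] tmodule_smul_closed[OF tmodule_M[OF E] v]]
    by (simp add: conj_commute)
qed

lemma C0_eq_at_zero_by_units:
  assumes F: "F \<in> cM C" and L: "cC0 C (cK C) D F L" and R: "cC0 C (cK C) D F R"
    and zero: "cemb C 0 \<in> D"
    and scaled: "\<And>t. t \<in> kunits \<Longrightarrow> cemb C t \<in> D \<Longrightarrow>
                   msmul F t (L (cemb C t)) = msmul F t (R (cemb C t))"
  shows "L (cemb C 0) = R (cemb C 0)"
proof (rule C0_eq_on_units[OF F L R _ zero])
  fix a assume "a \<in> D \<inter> cemb C ` kunits"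
  then obtain t s where a: "a \<in> D" "a = cemb C t" and t: "t \<in> kunits" and "s * t = 1"
    unfolding kunits_def by (auto simp: mult.commute)
  then show "L a = R a"
    using tmodule_smul_unit_cancel[OF tmodule_M[OF F]] scaled[OF t]
      C0_image[OF K_in_M F L] C0_image[OF K_in_M F R] by blast
qed

end

locale c1_map = c0_setting TK C
  for TK :: "'k::comm_ring_1 topology" and C :: "('k, 'a) c0data" +
  fixes E U F f g
  assumes E_in_M: "E \<in> cM C" and F_in_M: "F \<in> cM C"
    and f_C0: "cC0 C E U F f" and f1: "is_f1 C E U F f g"
begin

lemma tmodule_E: "tmodule E" and tmodule_F: "tmodule F"
  using tmodule_M E_in_M F_in_M by blast+

lemma U_open: "openin (mtop E) U"
  using C0_openin[OF E_in_M F_in_M f_C0] .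

lemma U_carrier: "y \<in> U \<Longrightarrow> y \<in> mcarrier E"
  using openin_carrier_subset[OF E_in_M U_open] by blast

lemma line_at_zero: "x \<in> U \<Longrightarrow> v \<in> mcarrier E \<Longrightarrow> madd E x (msmul E 0 v) = x"
  using tmodule_smul_zero[OF tmodule_E] tmodule_add_zero[OF tmodule_E U_carrier] by simp

lemma f_in_F: "y \<in> U \<Longrightarrow> f y \<in> mcarrier F"
  using C0_image[OF E_in_M F_in_M f_C0] by blast

lemma f1_C0: "cC0 C (cprod C E (cprod C E (cK C))) (U1 C E U) F g"
  using f1 unfolding is_f1_def by blast

lemma f1_difference:
  "y \<in> U \<Longrightarrow> v \<in> mcarrier E \<Longrightarrow> madd E y (msmul E t v) \<in> U \<Longrightarrow>
   msub F (f (madd E y (msmul E t v))) (f y) = msmul F t (g (triple C E y v t))"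
  using f1 unfolding is_f1_def by blast

lemma triple_in_U1:
  "y \<in> U \<Longrightarrow> v \<in> mcarrier E \<Longrightarrow> madd E y (msmul E t v) \<in> U \<Longrightarrow> triple C E y v t \<in> U1 C E U"
  unfolding U1_def by blast

lemma f1_in_F:
  "y \<in> U \<Longrightarrow> v \<in> mcarrier E \<Longrightarrow> madd E y (msmul E t v) \<in> U \<Longrightarrow> g (triple C E y v t) \<in> mcarrier F"
  using C0_image[OF prod_in_M[OF E_in_M prod_in_M[OF E_in_M K_in_M]] F_in_M f1_C0] triple_in_U1
  by blast

lemma f1_curve_C0:
  assumes G: "G \<in> cM C"
    and \<phi>: "cC0 C G D E \<phi>" and \<psi>: "cC0 C G D E \<psi>" and \<tau>: "cC0 C G D (cK C) \<tau>"
    and in_U: "\<And>a. a \<in> D \<Longrightarrow> \<phi> a \<in> U \<and> madd E (\<phi> a) (msmul E (kof C (\<tau> a)) (\<psi> a)) \<in> U"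
  shows "cC0 C G D F (\<lambda>a. g (triple C E (\<phi> a) (\<psi> a) (kof C (\<tau> a))))"
proof -
  have "cC0 C G D F (g \<circ> (\<lambda>a. triple C E (\<phi> a) (\<psi> a) (kof C (\<tau> a))))"
    by (rule C0_comp[OF G prod_in_M[OF E_in_M prod_in_M[OF E_in_M K_in_M]] F_in_M
          C0_triple[OF G E_in_M \<phi> \<psi> \<tau>] f1_C0])
      (use in_U triple_in_U1 C0_image[OF G E_in_M \<psi>] in blast)
  then show ?thesis by (simp add: comp_def)
qed

lemma f1_zero_C0:
  assumes x: "x \<in> U"
  shows "cC0 C E (mcarrier E) F (\<lambda>v. g (triple C E x v 0))"
proof -
  have E_open: "openin (mtop E) (mcarrier E)"
    using tmodule_topspace[OF tmodule_M[OF E_in_M]] by (metis openin_topspace)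
  have "cC0 C E (mcarrier E) F (\<lambda>v. g (triple C E x v (kof C (cemb C 0))))"
    by (rule f1_curve_C0[OF E_in_M C0_const[OF E_in_M E_in_M E_open U_carrier[OF x]]
          C0_ident[OF E_in_M E_open] C0_const[OF E_in_M K_in_M E_open emb_in_K]])
      (simp add: x line_at_zero)
  then show ?thesis by simp
qed

lemma f1_add_scaled:
  assumes x: "x \<in> U" and v: "v \<in> mcarrier E" and w: "w \<in> mcarrier E"
    and B: "madd E x (msmul E t v) \<in> U" and A: "madd E x (msmul E t (madd E v w)) \<in> U"
  shows "msmul F t (g (triple C E x (madd E v w) t))
       = msmul F t (madd F (g (triple C E x v t)) (g (triple C E (madd E x (msmul E t v)) w t)))"
proof -
  let ?B = "madd E x (msmul E t v)"
  have shift: "madd E ?B (msmul E t w) = madd E x (msmul E t (madd E v w))"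
    using tmodule_add_smul_add[OF tmodule_E U_carrier[OF x] v w] .
  have BU: "madd E ?B (msmul E t w) \<in> U" using A shift by simp
  have gv: "g (triple C E x v t) \<in> mcarrier F" and gw: "g (triple C E ?B w t) \<in> mcarrier F"
    using f1_in_F[OF x v B] f1_in_F[OF B w BU] .
  have "msmul F t (g (triple C E x (madd E v w) t))
      = msub F (f (madd E x (msmul E t (madd E v w)))) (f x)"
    using f1_difference[OF x tmodule_add_closed[OF tmodule_E v w] A] by simp
  also have "\<dots> = madd F (msub F (f (madd E ?B (msmul E t w))) (f ?B)) (msub F (f ?B) (f x))"
    using tmodule_sub_add_sub[OF tmodule_F f_in_F[OF A] f_in_F[OF B] f_in_F[OF x]] shift by simp
  also have "\<dots> = madd F (msmul F t (g (triple C E ?B w t))) (msmul F t (g (triple C E x v t)))"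
    using f1_difference[OF B w BU] f1_difference[OF x v B] by simp
  also have "\<dots> = msmul F t (madd F (g (triple C E x v t)) (g (triple C E ?B w t)))"
    using tmodule_smul_add[OF tmodule_F gv gw] tmodule_add_commute[OF tmodule_F]
      tmodule_smul_closed[OF tmodule_F gv] tmodule_smul_closed[OF tmodule_F gw] by simp
  finally show ?thesis .
qed

lemma f1_smul_scaled:
  assumes x: "x \<in> U" and v: "v \<in> mcarrier E" and A: "madd E x (msmul E (r * t) v) \<in> U"
  shows "msmul F t (g (triple C E x (msmul E r v) t))
       = msmul F t (msmul F r (g (triple C E x v (r * t))))"
proof -
  have scale: "msmul E (r * t) v = msmul E t (msmul E r v)"
    using tmodule_smul_mult[OF tmodule_E v, of t r] by (simp add: mult.commute)
  have "msmul F t (g (triple C E x (msmul E r v) t)) = msub F (f (madd E x (msmul E (r * t) v))) (f x)"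
    using f1_difference[OF x tmodule_smul_closed[OF tmodule_E v]] A by (simp add: scale)
  also have "\<dots> = msmul F (r * t) (g (triple C E x v (r * t)))"
    using f1_difference[OF x v A] .
  also have "\<dots> = msmul F t (msmul F r (g (triple C E x v (r * t))))"
    using tmodule_smul_mult[OF tmodule_F f1_in_F[OF x v A], of t r] by (simp add: mult.commute)
  finally show ?thesis .
qed

lemma f1_zero_add:
  assumes x: "x \<in> U" and v: "v \<in> mcarrier E" and w: "w \<in> mcarrier E"
  shows "g (triple C E x (madd E v w) 0) = madd F (g (triple C E x v 0)) (g (triple C E x w 0))"
proof -
  have xE: "x \<in> mcarrier E" using U_carrier[OF x] .
  have vw: "madd E v w \<in> mcarrier E" using tmodule_add_closed[OF tmodule_E v w] .
  let ?p = "\<lambda>a. madd E x (msmul E (kof C a) v)"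
  define D where "D = {a \<in> mcarrier (cK C). ?p a \<in> U}
    \<inter> {a \<in> mcarrier (cK C). madd E x (msmul E (kof C a) (madd E v w)) \<in> U}"
  have D: "openin (mtop (cK C)) D"
    unfolding D_def by (intro openin_Int openin_line_preimage[OF E_in_M U_open xE] v vw)
  have p: "cC0 C (cK C) D E ?p"
  proof -
    have "cC0 C (cK C) (mcarrier (cK C)) E ?p"
      by (rule C0_cong[OF K_in_M E_in_M C0_line[OF E_in_M v xE]])
        (simp add: tmodule_add_commute[OF tmodule_E xE] tmodule_smul_closed[OF tmodule_E v])
    then show ?thesis by (rule C0_restrict[OF K_in_M E_in_M _ D]) (auto simp: D_def)
  qed
  note const = C0_const[OF K_in_M E_in_M D] and ident = C0_ident[OF K_in_M D]
  let ?L = "\<lambda>a. g (triple C E x (madd E v w) (kof C a))"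
  let ?R = "\<lambda>a. madd F (g (triple C E x v (kof C a))) (g (triple C E (?p a) w (kof C a)))"
  have "?L (cemb C 0) = ?R (cemb C 0)"
  proof (rule C0_eq_at_zero_by_units[OF F_in_M])
    show "cC0 C (cK C) D F ?L"
      by (rule f1_curve_C0[OF K_in_M const[OF xE] const[OF vw] ident]) (simp add: D_def x)
    show "cC0 C (cK C) D F ?R"
      by (intro C0_add[OF K_in_M F_in_M] f1_curve_C0[OF K_in_M const[OF xE] const[OF v] ident]
          f1_curve_C0[OF K_in_M p const[OF w] ident])
        (auto simp: D_def x tmodule_add_smul_add[OF tmodule_E xE v w])
    show "cemb C 0 \<in> D"
      using x v vw emb_in_K by (simp add: D_def line_at_zero)
  next
    fix t assume "cemb C t \<in> D"
    then show "msmul F t (?L (cemb C t)) = msmul F t (?R (cemb C t))"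
      using f1_add_scaled[OF x v w] unfolding D_def by simp
  qed
  then show ?thesis using x v by (simp add: line_at_zero)
qed

lemma f1_zero_smul:
  assumes x: "x \<in> U" and v: "v \<in> mcarrier E"
  shows "g (triple C E x (msmul E r v) 0) = msmul F r (g (triple C E x v 0))"
proof -
  have xE: "x \<in> mcarrier E" using U_carrier[OF x] .
  have rv: "msmul E r v \<in> mcarrier E" using tmodule_smul_closed[OF tmodule_E v] .
  define D where "D = {a \<in> mcarrier (cK C). madd E x (msmul E (kof C a) (msmul E r v)) \<in> U}"
  have D: "openin (mtop (cK C)) D"
    unfolding D_def by (rule openin_line_preimage[OF E_in_M U_open xE rv])
  have rs: "msmul E (r * s) v = msmul E s (msmul E r v)" for s
    using tmodule_smul_mult[OF tmodule_E v, of s r] by (simp add: mult.commute)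
  have scale: "cC0 C (cK C) D (cK C) (\<lambda>a. msmul (cK C) r a)"
    by (rule C0_restrict[OF K_in_M K_in_M C0_scale[OF K_in_M] D]) (auto simp: D_def)
  note const = C0_const[OF K_in_M E_in_M D] and ident = C0_ident[OF K_in_M D]
  let ?L = "\<lambda>a. g (triple C E x (msmul E r v) (kof C a))"
  let ?R = "\<lambda>a. msmul F r (g (triple C E x v (kof C (msmul (cK C) r a))))"
  have "?L (cemb C 0) = ?R (cemb C 0)"
  proof (rule C0_eq_at_zero_by_units[OF F_in_M])
    show "cC0 C (cK C) D F ?L"
      by (rule f1_curve_C0[OF K_in_M const[OF xE] const[OF rv] ident]) (simp add: D_def x)
    show "cC0 C (cK C) D F ?R"
      by (intro C0_smul[OF K_in_M F_in_M] f1_curve_C0[OF K_in_M const[OF xE] const[OF v] scale])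
        (auto simp: D_def x kof_smul_K rs)
    show "cemb C 0 \<in> D"
      using x rv emb_in_K by (simp add: D_def line_at_zero)
  next
    fix t assume "cemb C t \<in> D"
    then show "msmul F t (?L (cemb C t)) = msmul F t (?R (cemb C t))"
      using f1_smul_scaled[OF x v, of r t] unfolding D_def
      by (simp add: smul_K_emb rs)
  qed
  then show ?thesis using x rv by (simp add: smul_K_emb line_at_zero)
qed

end

theorem proposition2p2:
  fixes TK :: "'k::comm_ring_1 topology"
    and C :: "('k, 'a) c0data"
  assumes "c0_concept TK C"
    and "E \<in> cM C" and "F \<in> cM C"
    and "openin (mtop E) U"
    and "is_C1 C E U F f"
    and "x \<in> U"
  shows "(\<forall>v\<in>mcarrier E. \<forall>w\<in>mcarrier E.
            dmap C E U F f x (madd E v w) = madd F (dmap C E U F f x v) (dmap C E U F f x w)) \<and>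
         (\<forall>r. \<forall>v\<in>mcarrier E. dmap C E U F f x (msmul E r v) = msmul F r (dmap C E U F f x v)) \<and>
         cC0 C E (mcarrier E) F (dmap C E U F f x)"
proof -
  define g where "g = (SOME g. is_f1 C E U F f g)"
  have "is_f1 C E U F f g"
    using assms(5) unfolding is_C1_def g_def by (simp add: someI_ex)
  then interpret c1_map TK C E U F f g
    using assms(1-3,5) unfolding is_C1_def by unfold_locales blast+
  have "dmap C E U F f x = (\<lambda>v. g (triple C E x v 0))"
    unfolding dmap_def g_def by simp
  then show ?thesis
    using f1_zero_add[OF assms(6)] f1_zero_smul[OF assms(6)] f1_zero_C0[OF assms(6)] by simp
qed

end
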